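(* For every positive integer $n$, $$\sum_{k=0}^{n-1}\binom{n}{k}^{-2}=\frac{(n+1)!\,(n+1)^2}{(n+\frac{3}{2})!\,4^n}\sum_{j=0}^{n-1}\frac{(3j^3+12j^2+18j+10)\,4^j\,(j+\frac32)!}{(j+1)^2\,(j+1)!\,(j+2)^3}.$$
   Context: Here factorials of non-integers are defined via the Gamma function: $x!:=\Gamma(x+1)$ for all real $x>-1$. *)

theory Defs
  imports "HOL-Analysis.Analysis"
begin

text \<open>Factorial of a real argument via the Gamma function: x! = Gamma(x+1), for x > -1.\<close>
definition gfact :: "real \<Rightarrow> real" where
  "gfact x = Gamma (x + 1)"

end

theory Submission
  imports Defs
begin

text \<open>Write \<open>u n = \<Sum>k\<le>n. 1/(n choose k)\<^sup>2\<close>, so the left-hand side is \<open>u n - 1\<close>.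
  A Wilf-Zeilberger style telescoping certificate yields the first-order recurrence
  \<open>2(n+1)\<^sup>2(2n+5) (u(n+1) - 1) = (n+2)\<^sup>3 (u n - 1) + 3n\<^sup>3+12n\<^sup>2+18n+10\<close>.
  Its homogeneous part is solved by \<open>(n+1)! (n+1)\<^sup>2 / ((n+3/2)! 4\<^sup>n)\<close>; dividing by this
  solution turns the recurrence into a telescoping sum whose increments are the summands
  on the right-hand side.\<close>

definition inv_binomial_sq_sum :: "nat \<Rightarrow> real" where
  "inv_binomial_sq_sum n = (\<Sum>k\<le>n. 1 / (real (n choose k))^2)"

lemma divide_eq_divide_of_mult_eq:
  fixes a b x y :: real
  assumes "a * x = b * y" "a \<noteq> 0" "b \<noteq> 0"
  shows "b / x = a / y"
proof (cases "y = 0")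
  case False
  then have "x \<noteq> 0"
    using assms by auto
  with False show ?thesis
    using assms by (simp add: field_simps)
qed (use assms in simp)

lemma binomial_Suc_left_divide:
  assumes "k \<le> n"
  shows "(real n + 1) / real (Suc n choose k) = (real n + 1 - real k) / real (n choose k)"
proof (rule divide_eq_divide_of_mult_eq)
  have "real (Suc n - k) = real n + 1 - real k"
    using assms by (simp add: of_nat_diff)
  then show "(real n + 1 - real k) * real (Suc n choose k) = (real n + 1) * real (n choose k)"
    using arg_cong[OF binomial_absorb_comp[of "Suc n" k], of real]
    by (simp only: of_nat_mult diff_Suc_1 of_nat_Suc add.commute)
qed (use assms in auto)

(* For k > n both sides are 0, since x / 0 = 0. *)
lemma binomial_Suc_Suc_divide:
  "(real n + 1) / real (Suc n choose Suc k) = (real k + 1) / real (n choose k)"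
proof (rule divide_eq_divide_of_mult_eq)
  show "(real k + 1) * real (Suc n choose Suc k) = (real n + 1) * real (n choose k)"
    using arg_cong[OF Suc_times_binomial[of k n], of real] by (simp add: algebra_simps del: binomial_Suc_Suc)
qed auto

definition wz_certificate :: "nat \<Rightarrow> nat \<Rightarrow> real" where
  "wz_certificate n k = ((real n + 1) / real (Suc n choose k))^2 * (2 * real k - 3 * (real n + 2))"

lemma wz_certificate_step:
  assumes "k \<le> n"
  shows "wz_certificate n (Suc k) - wz_certificate n k =
    (1 / real (n choose k))^2 * (2 * (2 * real n + 5) * (real n + 1 - real k)^2 - (real n + 2)^3)"
proof -
  define b where "b = 1 / real (n choose k)"
  have "(real n + 1) / real (Suc n choose Suc k) = (real k + 1) * b"
    using binomial_Suc_Suc_divide[of n k] unfolding b_def by simp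
  then have "wz_certificate n (Suc k) = ((real k + 1) * b)^2 * (2 * real k + 2 - 3 * (real n + 2))"
    unfolding wz_certificate_def by simp
  moreover have "(real n + 1) / real (Suc n choose k) = (real n + 1 - real k) * b"
    using binomial_Suc_left_divide[OF assms] unfolding b_def by simp
  then have "wz_certificate n k = ((real n + 1 - real k) * b)^2 * (2 * real k - 3 * (real n + 2))"
    unfolding wz_certificate_def by simp
  ultimately show ?thesis
    unfolding b_def[symmetric] by (simp add: algebra_simps power2_eq_square power3_eq_cube)
qed

lemma inv_binomial_sq_weighted_sum:
  "(\<Sum>k\<le>n. (1 / real (n choose k))^2 * (2 * (2 * real n + 5) * (real n + 1 - real k)^2 - (real n + 2)^3))
     = 2 * (real n + 1)^3"
proof -
  have "(\<Sum>k\<le>n. (1 / real (n choose k))^2 * (2 * (2 * real n + 5) * (real n + 1 - real k)^2 - (real n + 2)^3))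
      = (\<Sum>k<Suc n. wz_certificate n (Suc k) - wz_certificate n k)"
    by (rule sum.cong) (auto simp: wz_certificate_step lessThan_Suc_atMost)
  also have "\<dots> = wz_certificate n (Suc n) - wz_certificate n 0"
    by (rule sum_lessThan_telescope)
  also have "\<dots> = 2 * (real n + 1)^3"
    by (simp add: wz_certificate_def algebra_simps power2_eq_square power3_eq_cube)
  finally show ?thesis .
qed

lemma inv_binomial_sq_sum_recurrence:
  "2 * (real n + 1)^2 * (2 * real n + 5) * (inv_binomial_sq_sum (Suc n) - 1) =
     (real n + 2)^3 * (inv_binomial_sq_sum n - 1) + (3 * real n^3 + 12 * real n^2 + 18 * real n + 10)"
proof -
  define S where "S = (\<Sum>k\<le>n. (real n + 1 - real k)^2 * (1 / real (n choose k))^2)"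
  have "(real n + 1)^2 * (inv_binomial_sq_sum (Suc n) - 1) =
      (\<Sum>k\<le>n. ((real n + 1) / real (Suc n choose k))^2)"
    by (simp add: inv_binomial_sq_sum_def sum_distrib_left power_divide)
  also have "\<dots> = S"
    unfolding S_def by (intro sum.cong) (simp_all add: binomial_Suc_left_divide power_divide)
  finally have shifted: "(real n + 1)^2 * (inv_binomial_sq_sum (Suc n) - 1) = S" .
  have telescoped: "2 * (2 * real n + 5) * S - (real n + 2)^3 * inv_binomial_sq_sum n = 2 * (real n + 1)^3"
    unfolding inv_binomial_sq_weighted_sum[of n, symmetric] S_def inv_binomial_sq_sum_def
      sum_distrib_left sum_subtractf[symmetric]
    by (intro sum.cong) (simp_all add: algebra_simps power_divide add_divide_distrib)
  have "2 * (real n + 1)^2 * (2 * real n + 5) * (inv_binomial_sq_sum (Suc n) - 1) =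
      2 * (2 * real n + 5) * ((real n + 1)^2 * (inv_binomial_sq_sum (Suc n) - 1))"
    by (simp only: ac_simps)
  also have "\<dots> = 2 * (2 * real n + 5) * S"
    by (simp only: shifted)
  also have "\<dots> = (real n + 2)^3 * (inv_binomial_sq_sum n - 1) + (3 * real n^3 + 12 * real n^2 + 18 * real n + 10)"
    using telescoped by (simp add: algebra_simps power2_eq_square power3_eq_cube)
  finally show ?thesis .
qed

lemma gfact_pos: "x > -1 \<Longrightarrow> gfact x > 0"
  unfolding gfact_def by (intro Gamma_real_pos) simp

lemma gfact_plus1:
  assumes "x > -1"
  shows "gfact (x + 1) = (x + 1) * gfact x"
proof -
  have "x + 1 \<notin> \<int>\<^sub>\<le>\<^sub>0"
    using assms nonpos_Ints_nonpos by fastforce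
  then show ?thesis
    unfolding gfact_def using Gamma_plus1[of "x + 1"] by simp
qed

definition normalizer :: "nat \<Rightarrow> real" where
  "normalizer n = fact (n + 1) * (real n + 1)^2 / (gfact (real n + 3/2) * 4^n)"

lemma normalizer_pos: "normalizer n > 0"
  unfolding normalizer_def using gfact_pos[of "real n + 3/2"] by simp

lemma normalizer_Suc:
  "normalizer (Suc n) = normalizer n * (real n + 2)^3 / (2 * (real n + 1)^2 * (2 * real n + 5))"
proof -
  define g where "g = gfact (real n + 3/2)"
  define F where "F = (fact (n + 1) :: real)"
  have "g > 0"
    unfolding g_def by (simp add: gfact_pos)
  have "gfact (real (Suc n) + 3/2) = (real n + 5/2) * g"
    unfolding g_def using gfact_plus1[of "real n + 3/2"] by (simp add: algebra_simps)
  moreover have "fact (Suc n + 1) = (real n + 2) * F"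
    unfolding F_def by (simp add: algebra_simps)
  ultimately have "normalizer (Suc n) = (real n + 2) * F * (real n + 2)^2 / ((real n + 5/2) * g * (4 * 4^n))"
    unfolding normalizer_def by (simp add: add.commute)
  also have "\<dots> = F * (real n + 1)^2 / (g * 4^n) * (real n + 2)^3 / (2 * (real n + 1)^2 * (2 * real n + 5))"
    using \<open>g > 0\<close> by (simp add: divide_simps add_pos_pos) (simp add: algebra_simps power2_eq_square power3_eq_cube)
  finally show ?thesis
    unfolding normalizer_def g_def F_def .
qed

definition series_term :: "nat \<Rightarrow> real" where
  "series_term j = (3 * real j^3 + 12 * real j^2 + 18 * real j + 10) * 4^j * gfact (real j + 3/2)
        / ((real j + 1)^2 * fact (j+1) * (real j + 2)^3)"

lemma series_term_eq:
  "series_term n = (3 * real n^3 + 12 * real n^2 + 18 * real n + 10) / (normalizer n * (real n + 2)^3)"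
  unfolding series_term_def normalizer_def by (simp add: field_simps)

lemma inv_binomial_sq_sum_div_normalizer_Suc:
  "(inv_binomial_sq_sum (Suc n) - 1) / normalizer (Suc n) =
     (inv_binomial_sq_sum n - 1) / normalizer n + series_term n"
proof -
  define c where "c = 3 * real n^3 + 12 * real n^2 + 18 * real n + 10"
  have "normalizer n > 0" "(real n + 2)^3 > 0" "2 * (real n + 1)^2 * (2 * real n + 5) > 0"
    using normalizer_pos by simp_all
  then have "(inv_binomial_sq_sum (Suc n) - 1) / normalizer (Suc n) =
      2 * (real n + 1)^2 * (2 * real n + 5) * (inv_binomial_sq_sum (Suc n) - 1) / (normalizer n * (real n + 2)^3)"
    unfolding normalizer_Suc by (simp add: field_simps)
  also have "\<dots> = ((real n + 2)^3 * (inv_binomial_sq_sum n - 1) + c) / (normalizer n * (real n + 2)^3)"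
    unfolding c_def inv_binomial_sq_sum_recurrence ..
  also have "\<dots> = (inv_binomial_sq_sum n - 1) / normalizer n + c / (normalizer n * (real n + 2)^3)"
    using \<open>(real n + 2)^3 > 0\<close> by (simp add: add_divide_distrib)
  finally show ?thesis
    unfolding series_term_eq c_def .
qed

lemma inv_binomial_sq_sum_div_normalizer:
  "(inv_binomial_sq_sum n - 1) / normalizer n = (\<Sum>j<n. series_term j)"
proof (induction n)
  case 0
  show ?case
    by (simp add: inv_binomial_sq_sum_def)
next
  case (Suc n)
  then show ?case
    by (simp add: inv_binomial_sq_sum_div_normalizer_Suc)
qed

theorem theorem1:
  fixes n :: nat
  assumes "n \<ge> 1"
  shows "(\<Sum>k=0..n-1. 1 / (real (n choose k))^2) =
    (fact (n+1) * (real n + 1)^2) / (gfact (real n + 3/2) * 4^n) *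
    (\<Sum>j=0..n-1. (3 * real j^3 + 12 * real j^2 + 18 * real j + 10) * 4^j * gfact (real j + 3/2)
        / ((real j + 1)^2 * fact (j+1) * (real j + 2)^3))"
proof -
  have range: "{0..n-1} = {..<n}"
    using assms by auto
  have "(\<Sum>k=0..n-1. 1 / (real (n choose k))^2) = inv_binomial_sq_sum n - 1"
    unfolding range inv_binomial_sq_sum_def lessThan_Suc_atMost[symmetric] by simp
  also have "\<dots> = normalizer n * (\<Sum>j<n. series_term j)"
    using normalizer_pos[of n] inv_binomial_sq_sum_div_normalizer[of n] by (simp add: field_simps)
  finally show ?thesis
    unfolding range normalizer_def series_term_def .
qed

end
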